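(* Let $I_1,\dots,I_t\subset S$ be monomial ideals, where each $I_j$ is generated in a single degree $d_j$, $d_1\le\cdots\le d_t$, and each $I_j$ has linear quotients with respect to a fixed ordering of $\mathcal{G}(I_j)$. Suppose the following property $( * )$ holds: for all $u\in\mathcal{G}(I_i)$ and $v\in\mathcal{G}(I_j)$ with $i<j$ and $\deg(u:v)>1$, there exists a monomial $w$ belonging to $(I_1\cup\cdots\cup I_{j-1})\cup\{w\in\mathcal{G}(I_j): w \text{ precedes } v \text{ in the fixed linear quotients order of } I_j\}$ such that $\deg(w:v)=1$ and $w:v$ divides $u:v$. Then $I=I_1+\cdots+I_t$ has linear quotients.
   Context: $S=K[x_1,\dots,x_n]$. For a monomial ideal $I$, $\mathcal{G}(I)$ is its minimal monomial generating set. A monomial ideal $I$ has linear quotients if $\mathcal{G}(I)$ can be ordered $u_1,\dots,u_s$ so that for each $i=2,\dots,s$ the colon ideal $(u_1,\dots,u_{i-1}):(u_i)$ is generated by variables; such an ordering is a linear quotients order. For monomials $u,v$, $u:v=u/\gcd(u,v)$. *)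

theory Defs
  imports Main
begin

text \<open>Monomials of S = K[x_1,...,x_n] are encoded by exponent vectors
  nat \<Rightarrow> nat supported in {..<n} (variable x_(i+1) has index i).
  A monomial ideal is encoded by the set of monomials it contains
  (this determines it, and K plays no role).\<close>

type_synonym monom = "nat \<Rightarrow> nat"

definition is_monom :: "nat \<Rightarrow> monom \<Rightarrow> bool" where
  "is_monom n m \<longleftrightarrow> (\<forall>i\<ge>n. m i = 0)"

definition mdeg :: "nat \<Rightarrow> monom \<Rightarrow> nat" where
  "mdeg n m = (\<Sum>i<n. m i)"

definition mdvd :: "monom \<Rightarrow> monom \<Rightarrow> bool" where
  "mdvd u v \<longleftrightarrow> (\<forall>i. u i \<le> v i)"

text \<open>u : v = u / gcd(u,v)\<close>
definition mcolon :: "monom \<Rightarrow> monom \<Rightarrow> monom" where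
  "mcolon u v = (\<lambda>i. u i - min (u i) (v i))"

definition monomial_ideal :: "nat \<Rightarrow> monom set \<Rightarrow> bool" where
  "monomial_ideal n I \<longleftrightarrow> (\<forall>u\<in>I. is_monom n u) \<and>
     (\<forall>u\<in>I. \<forall>v. is_monom n v \<and> mdvd u v \<longrightarrow> v \<in> I)"

definition mgens :: "monom set \<Rightarrow> monom set" where
  "mgens I = {u\<in>I. \<forall>v\<in>I. mdvd v u \<longrightarrow> v = u}"

definition gen_ideal :: "nat \<Rightarrow> monom set \<Rightarrow> monom set" where
  "gen_ideal n A = {v. is_monom n v \<and> (\<exists>u\<in>A. mdvd u v)}"

definition colon_ideal :: "nat \<Rightarrow> monom set \<Rightarrow> monom \<Rightarrow> monom set" where
  "colon_ideal n J u = {m. is_monom n m \<and> (\<lambda>i. m i + u i) \<in> J}"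

definition generated_by_variables :: "nat \<Rightarrow> monom set \<Rightarrow> bool" where
  "generated_by_variables n J \<longleftrightarrow> (\<forall>m\<in>mgens J. mdeg n m = 1)"

definition lq_order :: "nat \<Rightarrow> monom set \<Rightarrow> monom list \<Rightarrow> bool" where
  "lq_order n I us \<longleftrightarrow> distinct us \<and> set us = mgens I \<and>
     (\<forall>i. 1 \<le> i \<and> i < length us \<longrightarrow>
        generated_by_variables n (colon_ideal n (gen_ideal n (set (take i us))) (us ! i)))"

definition has_linear_quotients :: "nat \<Rightarrow> monom set \<Rightarrow> bool" where
  "has_linear_quotients n I \<longleftrightarrow> (\<exists>us. lq_order n I us)"

definition precedes :: "monom list \<Rightarrow> monom \<Rightarrow> monom \<Rightarrow> bool" where
  "precedes us w v \<longleftrightarrow> (\<exists>p q. p < q \<and> q < length us \<and> us ! p = w \<and> us ! q = v)"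

end

theory Submission
  imports Defs "HOL-Library.Product_Lexorder"
begin

text \<open>Order the minimal generators of the sum by the first summand \<open>I\<^sub>j\<close> containing them,
  and within \<open>I\<^sub>j\<close> by its linear quotients order. For a generator \<open>v\<close> of \<open>I\<^sub>j\<close>, the
  colon ideal of the earlier generators by \<open>v\<close> is generated by the monomials \<open>u : v\<close>, so it
  suffices to find a variable in it dividing each \<open>u : v\<close>. If \<open>u\<close> also lies in \<open>I\<^sub>j\<close>, the
  linear quotients of \<open>I\<^sub>j\<close> provide one. If \<open>u\<close> comes from an earlier \<open>I\<^sub>i\<close>, then
  \<open>u : v \<noteq> 1\<close> since \<open>v \<notin> I\<^sub>i\<close>; either \<open>u : v\<close> is itself a variable, or property \<open>(*)\<close>
  yields \<open>w\<close> with \<open>w : v\<close> a variable dividing \<open>u : v\<close>. Because the generating degrees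
  increase with \<open>j\<close>, every such \<open>w\<close> is divisible by an earlier generator of the sum, so
  \<open>w : v\<close> lies in the colon ideal.\<close>

lemma mdvd_refl [simp]: "mdvd u u"
  by (simp add: mdvd_def)

lemma mdvd_trans: "mdvd u v \<Longrightarrow> mdvd v w \<Longrightarrow> mdvd u w"
  unfolding mdvd_def using le_trans by blast

lemma is_monom_mdvd: "is_monom n v \<Longrightarrow> mdvd u v \<Longrightarrow> is_monom n u"
  unfolding is_monom_def mdvd_def by (metis le_zero_eq)

lemma is_monom_add: "is_monom n m \<Longrightarrow> is_monom n v \<Longrightarrow> is_monom n (\<lambda>i. m i + v i)"
  unfolding is_monom_def by simp

lemma mdvd_mdeg_eq:
  assumes "is_monom n v" "mdvd u v" "mdeg n v \<le> mdeg n u"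
  shows "u = v"
proof (rule ccontr)
  assume "u \<noteq> v"
  then obtain i where i: "u i \<noteq> v i" by blast
  have "is_monom n u" using assms is_monom_mdvd by blast
  then have "i < n" using i assms(1) unfolding is_monom_def by (metis not_less)
  moreover have "u i < v i" using i assms(2) unfolding mdvd_def by (simp add: order_less_le)
  ultimately have "(\<Sum>i<n. u i) < (\<Sum>i<n. v i)"
    using assms(2) unfolding mdvd_def by (intro sum_strict_mono_ex1) auto
  then show False using assms(3) unfolding mdeg_def by simp
qed

lemma mgensD: "u \<in> mgens A \<Longrightarrow> u \<in> A"
  unfolding mgens_def by blast

lemma mgens_minimal: "u \<in> mgens A \<Longrightarrow> x \<in> A \<Longrightarrow> mdvd x u \<Longrightarrow> x = u"
  unfolding mgens_def by blast

lemma mgens_subset: "u \<in> mgens B \<Longrightarrow> A \<subseteq> B \<Longrightarrow> u \<in> A \<Longrightarrow> u \<in> mgens A"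
  unfolding mgens_def by blast

lemma exists_mgens_mdvd:
  assumes "\<forall>x\<in>A. is_monom n x" "m \<in> A"
  shows "\<exists>g\<in>mgens A. mdvd g m"
  using assms(2)
proof (induction "mdeg n m" arbitrary: m rule: less_induct)
  case less
  show ?case
  proof (cases "m \<in> mgens A")
    case False
    then obtain v where v: "v \<in> A" "mdvd v m" "v \<noteq> m"
      using less.prems unfolding mgens_def by blast
    then have "mdeg n v < mdeg n m"
      using mdvd_mdeg_eq[of n m v] assms(1) less.prems by fastforce
    then obtain g where "g \<in> mgens A" "mdvd g v" using less.hyps v by blast
    then show ?thesis using v mdvd_trans by blast
  qed (use mdvd_refl in blast)
qed

lemma is_monom_mcolon: "is_monom n u \<Longrightarrow> is_monom n (mcolon u v)"
  unfolding is_monom_def mcolon_def by simp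

lemma mcolon_mdvd: "mdvd u (\<lambda>i. m i + v i) \<Longrightarrow> mdvd (mcolon u v) m"
  unfolding mdvd_def mcolon_def by (simp add: le_diff_conv min_def)

lemma mdvd_mcolon_add: "mdvd u (\<lambda>i. mcolon u v i + v i)"
  unfolding mdvd_def mcolon_def by (simp add: min_def)

lemma mdeg_mcolon_eq_0:
  assumes "is_monom n u" "mdeg n (mcolon u v) = 0"
  shows "mdvd u v"
  unfolding mdvd_def
proof
  fix i
  show "u i \<le> v i"
  proof (cases "i < n")
    case True
    then have "mcolon u v i = 0" using assms(2) unfolding mdeg_def by simp
    then show ?thesis by (simp add: mcolon_def min_def split: if_splits)
  qed (use assms(1) in \<open>simp add: is_monom_def\<close>)
qed

lemma gen_ideal_subset: "A \<subseteq> gen_ideal n B \<Longrightarrow> gen_ideal n A \<subseteq> gen_ideal n B"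
  using mdvd_trans unfolding gen_ideal_def by blast

lemma colon_ideal_mono: "J \<subseteq> J' \<Longrightarrow> colon_ideal n J v \<subseteq> colon_ideal n J' v"
  unfolding colon_ideal_def by blast

lemma mcolon_mem_colon_ideal:
  assumes "w \<in> gen_ideal n A" "is_monom n v"
  shows "mcolon w v \<in> colon_ideal n (gen_ideal n A) v"
proof -
  obtain a where "a \<in> A" "mdvd a w" and w: "is_monom n w"
    using assms(1) unfolding gen_ideal_def by blast
  then have "mdvd a (\<lambda>i. mcolon w v i + v i)" using mdvd_mcolon_add mdvd_trans by blast
  then show ?thesis
    using \<open>a \<in> A\<close> assms(2) is_monom_mcolon[OF w] is_monom_add
    unfolding colon_ideal_def gen_ideal_def by blast
qed

text \<open>Since \<open>(A) : v\<close> is generated by the monomials \<open>u : v\<close> with \<open>u \<in> A\<close>, it suffices to find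
  a variable in \<open>(A) : v\<close> dividing each of them.\<close>
lemma generated_by_variables_colon_idealI:
  assumes "\<And>u. u \<in> A \<Longrightarrow> \<exists>x\<in>colon_ideal n (gen_ideal n A) v. mdeg n x = 1 \<and> mdvd x (mcolon u v)"
  shows "generated_by_variables n (colon_ideal n (gen_ideal n A) v)"
  unfolding generated_by_variables_def
proof
  fix m assume m: "m \<in> mgens (colon_ideal n (gen_ideal n A) v)"
  then obtain u where "u \<in> A" "mdvd u (\<lambda>i. m i + v i)"
    using mgensD unfolding colon_ideal_def gen_ideal_def by blast
  moreover obtain x where x: "x \<in> colon_ideal n (gen_ideal n A) v" "mdeg n x = 1"
    and "mdvd x (mcolon u v)"
    using assms calculation(1) by blast
  ultimately have "mdvd x m"
    using mcolon_mdvd mdvd_trans by blast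
  then show "mdeg n m = 1"
    using mgens_minimal[OF m x(1)] x(2) by simp
qed

lemma set_take_sorted_key:
  fixes f :: "'a \<Rightarrow> 'b::linorder"
  assumes "sorted_wrt (<) (map f xs)" "i < length xs"
  shows "set (take i xs) = {x \<in> set xs. f x < f (xs ! i)}"
proof -
  have sorted: "sorted_wrt (\<lambda>x y. f x < f y) xs"
    using assms(1) by (simp add: sorted_wrt_map)
  have key: "f (xs ! k) < f (xs ! i) \<longleftrightarrow> k < i" if "k < length xs" for k
    using assms(2) that sorted_wrt_nth_less[OF sorted, of k i] sorted_wrt_nth_less[OF sorted, of i k]
    by (cases k i rule: linorder_cases) auto
  have "set (take i xs) = (!) xs ` {..<i}"
    using nth_image[of i xs] assms(2) by (simp add: atLeast0LessThan)
  also have "{..<i} = {k. k < length xs \<and> f (xs ! k) < f (xs ! i)}"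
    using key assms(2) by auto
  also have "(!) xs ` \<dots> = {x \<in> set xs. f x < f (xs ! i)}"
    by (auto simp: in_set_conv_nth)
  finally show ?thesis .
qed

lemma finite_strict_sorted_key_list:
  fixes f :: "'a \<Rightarrow> 'b::linorder"
  assumes "finite A" "inj_on f A"
  obtains us where "distinct us" "set us = A" "sorted_wrt (<) (map f us)"
proof -
  obtain xs where xs: "distinct xs" "set xs = A" using finite_distinct_list[OF assms(1)] by blast
  define us where "us = sort_key f xs"
  have "distinct us" "set us = A" "sorted (map f us)"
    using xs by (simp_all add: us_def)
  moreover have "distinct (map f us)" using calculation assms(2) by (simp add: distinct_map)
  ultimately show ?thesis using that by (simp add: strict_sorted_iff)
qed

lemma has_linear_quotientsI:
  fixes f :: "monom \<Rightarrow> 'a::linorder"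
  assumes "finite (mgens I)" "inj_on f (mgens I)"
    and "\<And>v. v \<in> mgens I \<Longrightarrow>
           generated_by_variables n (colon_ideal n (gen_ideal n {u \<in> mgens I. f u < f v}) v)"
  shows "has_linear_quotients n I"
proof -
  obtain us where us: "distinct us" "set us = mgens I" "sorted_wrt (<) (map f us)"
    using finite_strict_sorted_key_list[OF assms(1,2)] .
  then have "set (take i us) = {u \<in> mgens I. f u < f (us ! i)}" if "i < length us" for i
    using set_take_sorted_key[OF us(3) that] us(2) by simp
  then have "lq_order n I us"
    unfolding lq_order_def using us(1,2) assms(3) nth_mem by fastforce
  then show ?thesis unfolding has_linear_quotients_def by blast
qed

definition list_index :: "'a list \<Rightarrow> 'a \<Rightarrow> nat" where
  "list_index xs x = length (takeWhile (\<lambda>y. y \<noteq> x) xs)"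

lemma list_index_less_length [simp]: "x \<in> set xs \<Longrightarrow> list_index xs x < length xs"
  unfolding list_index_def by (induction xs) auto

lemma nth_list_index [simp]: "x \<in> set xs \<Longrightarrow> xs ! list_index xs x = x"
  unfolding list_index_def by (induction xs) auto

lemma list_index_nth:
  assumes "distinct xs" "p < length xs"
  shows "list_index xs (xs ! p) = p"
proof -
  have "xs ! p \<in> set xs" using assms(2) by simp
  then show ?thesis
    using nth_eq_iff_index_eq[OF assms(1) list_index_less_length assms(2)] by auto
qed

lemma list_index_less_if_precedes:
  assumes "distinct xs" "precedes xs w v" shows "list_index xs w < list_index xs v"
proof -
  obtain p q where "p < q" "q < length xs" "xs ! p = w" "xs ! q = v"
    using assms(2) unfolding precedes_def by blast
  then show ?thesis using list_index_nth[OF assms(1)] by auto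
qed

locale lq_ideal_family =
  fixes n t :: nat and I :: "nat \<Rightarrow> monom set" and d :: "nat \<Rightarrow> nat"
    and ord :: "nat \<Rightarrow> monom list"
  assumes ideals: "\<And>j. 1 \<le> j \<Longrightarrow> j \<le> t \<Longrightarrow> monomial_ideal n (I j)"
    and single_degree: "\<And>j u. 1 \<le> j \<Longrightarrow> j \<le> t \<Longrightarrow> u \<in> mgens (I j) \<Longrightarrow> mdeg n u = d j"
    and degs_sorted: "\<And>i j. 1 \<le> i \<Longrightarrow> i \<le> j \<Longrightarrow> j \<le> t \<Longrightarrow> d i \<le> d j"
    and lq: "\<And>j. 1 \<le> j \<Longrightarrow> j \<le> t \<Longrightarrow> lq_order n (I j) (ord j)"
    and star: "\<And>i j u v. 1 \<le> i \<Longrightarrow> i < j \<Longrightarrow> j \<le> t \<Longrightarrow> u \<in> mgens (I i) \<Longrightarrow>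
                 v \<in> mgens (I j) \<Longrightarrow> mdeg n (mcolon u v) > 1 \<Longrightarrow>
                 \<exists>w. (w \<in> (\<Union>k\<in>{1..<j}. I k) \<or> (w \<in> mgens (I j) \<and> precedes (ord j) w v)) \<and>
                     mdeg n (mcolon w v) = 1 \<and> mdvd (mcolon w v) (mcolon u v)"
begin

abbreviation sum_ideal :: "monom set" where
  "sum_ideal \<equiv> \<Union>j\<in>{1..t}. I j"

lemma is_monom_if_mem: "1 \<le> k \<Longrightarrow> k \<le> t \<Longrightarrow> u \<in> I k \<Longrightarrow> is_monom n u"
  using ideals unfolding monomial_ideal_def by blast

lemma mem_if_mdvd: "1 \<le> k \<Longrightarrow> k \<le> t \<Longrightarrow> u \<in> I k \<Longrightarrow> is_monom n v \<Longrightarrow> mdvd u v \<Longrightarrow> v \<in> I k"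
  using ideals unfolding monomial_ideal_def by blast

lemma ord_mgens: "1 \<le> k \<Longrightarrow> k \<le> t \<Longrightarrow> distinct (ord k) \<and> set (ord k) = mgens (I k)"
  using lq unfolding lq_order_def by blast

definition block :: "monom \<Rightarrow> nat" where
  "block u = (LEAST k. 1 \<le> k \<and> k \<le> t \<and> u \<in> I k)"

lemma block:
  assumes "u \<in> sum_ideal"
  shows "1 \<le> block u" "block u \<le> t" "u \<in> I (block u)"
proof -
  obtain k where "1 \<le> k \<and> k \<le> t \<and> u \<in> I k" using assms by auto
  then have "1 \<le> block u \<and> block u \<le> t \<and> u \<in> I (block u)"
    unfolding block_def by (rule LeastI)
  then show "1 \<le> block u" "block u \<le> t" "u \<in> I (block u)" by blast+
qed

lemma block_le: "1 \<le> k \<Longrightarrow> k \<le> t \<Longrightarrow> u \<in> I k \<Longrightarrow> block u \<le> k"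
  unfolding block_def by (rule Least_le) blast

lemma mgens_block:
  assumes "u \<in> mgens sum_ideal"
  shows "u \<in> mgens (I (block u))"
proof (rule mgens_subset[OF assms])
  show "I (block u) \<subseteq> sum_ideal" using block(1,2)[OF mgensD[OF assms]] by auto
qed (use block(3)[OF mgensD[OF assms]] in simp)

lemma is_monom_if_mem_sum: "\<forall>u\<in>sum_ideal. is_monom n u"
  using is_monom_if_mem by (auto simp del: One_nat_def)

lemma finite_mgens_sum: "finite (mgens sum_ideal)"
proof (rule finite_subset)
  show "mgens sum_ideal \<subseteq> (\<Union>k\<in>{1..t}. set (ord k))"
  proof
    fix u assume u: "u \<in> mgens sum_ideal"
    then have "u \<in> set (ord (block u))"
      using mgens_block[OF u] block[OF mgensD[OF u]] ord_mgens by blast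
    then show "u \<in> (\<Union>k\<in>{1..t}. set (ord k))" using block(1,2)[OF mgensD[OF u]] by auto
  qed
qed simp

text \<open>Pairs are ordered lexicographically, as imported from Product_Lexorder.\<close>
definition rank :: "monom \<Rightarrow> nat \<times> nat" where
  "rank u = (block u, list_index (ord (block u)) u)"

lemma inj_on_rank: "inj_on rank (mgens sum_ideal)"
proof
  fix u v assume u: "u \<in> mgens sum_ideal" and v: "v \<in> mgens sum_ideal" and "rank u = rank v"
  then have "block u = block v" by (simp add: rank_def)
  moreover from this \<open>rank u = rank v\<close>
  have "list_index (ord (block v)) u = list_index (ord (block v)) v" by (simp add: rank_def)
  moreover have "u \<in> set (ord (block u))" "v \<in> set (ord (block v))"
    using mgens_block[OF u] mgens_block[OF v] block[OF mgensD[OF u]] block[OF mgensD[OF v]] ord_mgens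
    by blast+
  ultimately show "u = v" using nth_list_index by metis
qed

lemma mgens_sum_mdvd_mgens:
  assumes g: "g \<in> mgens sum_ideal" and k: "1 \<le> k" "k \<le> t"
    and h: "h \<in> mgens (I k)" and "mdvd g h"
  shows "block g \<le> k" and "block g = k \<Longrightarrow> g = h"
proof -
  have eq: "g = h" if "k \<le> block g" \<comment> \<open>then \<open>g\<close> has degree at least \<open>d k\<close>\<close>
  proof (rule mdvd_mdeg_eq)
    show "is_monom n h" using is_monom_if_mem[OF k mgensD[OF h]] .
    have "mdeg n h = d k" using single_degree[OF k h] .
    also have "\<dots> \<le> d (block g)" using degs_sorted[OF k(1) that] block(2)[OF mgensD[OF g]] .
    also have "\<dots> = mdeg n g"
      using single_degree[OF block(1,2)[OF mgensD[OF g]] mgens_block[OF g]] by simp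
    finally show "mdeg n h \<le> mdeg n g" .
  qed (fact \<open>mdvd g h\<close>)
  show "block g \<le> k"
  proof (cases "k \<le> block g")
    case True
    then have "g = h" by (rule eq)
    then show ?thesis using block_le[OF k mgensD[OF h]] by simp
  qed simp
  show "g = h" if "block g = k" using that by (intro eq) simp
qed

abbreviation earlier :: "monom \<Rightarrow> monom set" where
  "earlier v \<equiv> {u \<in> mgens sum_ideal. rank u < rank v}"

lemma mem_gen_ideal_earlier:
  assumes v: "v \<in> mgens sum_ideal"
    and w: "w \<in> (\<Union>k\<in>{1..<block v}. I k) \<or>
            (w \<in> mgens (I (block v)) \<and> precedes (ord (block v)) w v)"
  shows "w \<in> gen_ideal n (earlier v)"
proof -
  have bv: "1 \<le> block v" "block v \<le> t" using block[OF mgensD[OF v]] by simp_all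
  obtain k h where k: "1 \<le> k" "k \<le> block v" and h: "h \<in> mgens (I k)" "mdvd h w"
    and wk: "w \<in> I k" and pre: "k = block v \<Longrightarrow> precedes (ord k) h v"
  proof (cases "w \<in> mgens (I (block v)) \<and> precedes (ord (block v)) w v")
    case True
    then show ?thesis using that[of "block v" w] bv mgensD by auto
  next
    case False
    then obtain k where "k \<in> {1..<block v}" "w \<in> I k" using w by blast
    then have k: "1 \<le> k" "k < block v" "w \<in> I k" by simp_all
    moreover have "\<forall>x\<in>I k. is_monom n x" using is_monom_if_mem k bv by simp
    ultimately obtain h where "h \<in> mgens (I k)" "mdvd h w"
      using exists_mgens_mdvd by blast
    then show ?thesis using that[of k h] k by simp
  qed
  have kt: "k \<le> t" using k bv by simp
  obtain g where g: "g \<in> mgens sum_ideal" "mdvd g h"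
  proof -
    have "h \<in> sum_ideal" using mgensD[OF h(1)] k(1) kt by (intro UN_I[of k]) simp_all
    then show ?thesis using exists_mgens_mdvd[OF is_monom_if_mem_sum] that by blast
  qed
  have "rank g < rank v"
  proof (cases "block g < block v")
    case False
    then have "block g = k" "g = h"
      using mgens_sum_mdvd_mgens[OF g(1) k(1) kt h(1) g(2)] k(2) by simp_all
    moreover have "k = block v" using False k(2) calculation(1) by simp
    ultimately have "precedes (ord k) g v" using pre by simp
    then have "list_index (ord k) g < list_index (ord k) v"
      using list_index_less_if_precedes ord_mgens[OF k(1) kt] by blast
    then show ?thesis using \<open>block g = k\<close> False k(2) by (simp add: rank_def)
  qed (simp add: rank_def)
  then show ?thesis
    unfolding gen_ideal_def using g mdvd_trans[OF g(2) h(2)] is_monom_if_mem[OF k(1) kt wk] by blast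
qed

lemma variable_dvd_mcolon_earlier_block:
  assumes v: "v \<in> mgens sum_ideal" and u: "u \<in> mgens sum_ideal" and less: "block u < block v"
  shows "\<exists>x\<in>colon_ideal n (gen_ideal n (earlier v)) v. mdeg n x = 1 \<and> mdvd x (mcolon u v)"
proof -
  have bu: "1 \<le> block u" "block u \<le> t" "u \<in> mgens (I (block u))"
    using block[OF mgensD[OF u]] mgens_block[OF u] by simp_all
  have bv: "block v \<le> t" "v \<in> mgens (I (block v))"
    using block[OF mgensD[OF v]] mgens_block[OF v] by simp_all
  have vmon: "is_monom n v" and umon: "is_monom n u"
    using is_monom_if_mem_sum mgensD[OF v] mgensD[OF u] by blast+
  have "mdeg n (mcolon u v) \<noteq> 0"
  proof
    assume "mdeg n (mcolon u v) = 0"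
    then have "mdvd u v" using mdeg_mcolon_eq_0[OF umon] by simp
    then have "v \<in> I (block u)" using mem_if_mdvd[OF bu(1,2) mgensD[OF bu(3)] vmon] by simp
    then have "block v \<le> block u" using block_le[OF bu(1,2)] by simp
    with less show False by simp
  qed
  then consider "mdeg n (mcolon u v) = 1" | "mdeg n (mcolon u v) > 1" by linarith
  then show ?thesis
  proof cases
    case 1
    have "rank u < rank v" using less by (simp add: rank_def)
    then have "u \<in> gen_ideal n (earlier v)"
      unfolding gen_ideal_def using u umon mdvd_refl by blast
    then show ?thesis using mcolon_mem_colon_ideal[OF _ vmon] 1 mdvd_refl by blast
  next
    case 2
    then obtain w where w: "w \<in> (\<Union>k\<in>{1..<block v}. I k) \<or>
                            (w \<in> mgens (I (block v)) \<and> precedes (ord (block v)) w v)"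
      and "mdeg n (mcolon w v) = 1" "mdvd (mcolon w v) (mcolon u v)"
      using star[OF bu(1) less bv(1) bu(3) bv(2)] by blast
    moreover have "w \<in> gen_ideal n (earlier v)" using mem_gen_ideal_earlier[OF v w] .
    ultimately show ?thesis using mcolon_mem_colon_ideal[OF _ vmon] by blast
  qed
qed

lemma variable_dvd_mcolon_same_block:
  assumes v: "v \<in> mgens sum_ideal" and u: "u \<in> mgens sum_ideal" and same: "block u = block v"
    and less: "list_index (ord (block v)) u < list_index (ord (block v)) v"
  shows "\<exists>x\<in>colon_ideal n (gen_ideal n (earlier v)) v. mdeg n x = 1 \<and> mdvd x (mcolon u v)"
proof -
  define j where "j = block v"
  define p where "p = list_index (ord j) u"
  define q where "q = list_index (ord j) v"
  define K where "K = colon_ideal n (gen_ideal n (set (take q (ord j)))) v"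
  have j: "1 \<le> j" "j \<le> t" using block[OF mgensD[OF v]] by (simp_all add: j_def)
  have "u \<in> set (ord j)" "v \<in> set (ord j)"
    using mgens_block[OF u] mgens_block[OF v] same ord_mgens[OF j] by (simp_all add: j_def)
  then have p: "ord j ! p = u" and q: "q < length (ord j)" "ord j ! q = v"
    by (simp_all add: p_def q_def)
  have "p < q" using less by (simp add: p_def q_def j_def)
  then have "take q (ord j) ! p = u" using p by simp
  moreover have "p < length (take q (ord j))" using \<open>p < q\<close> q(1) by simp
  ultimately have "u \<in> set (take q (ord j))" using nth_mem by metis
  then have "u \<in> gen_ideal n (set (take q (ord j)))"
    unfolding gen_ideal_def using is_monom_if_mem_sum mgensD[OF u] mdvd_refl by blast
  then have "mcolon u v \<in> K"
    unfolding K_def using mcolon_mem_colon_ideal is_monom_if_mem_sum mgensD[OF v] by blast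
  then obtain x where x: "x \<in> mgens K" "mdvd x (mcolon u v)"
    using exists_mgens_mdvd[of K n] unfolding K_def colon_ideal_def by blast
  have "\<forall>i. 1 \<le> i \<and> i < length (ord j) \<longrightarrow>
          generated_by_variables n (colon_ideal n (gen_ideal n (set (take i (ord j)))) (ord j ! i))"
    using lq[OF j] unfolding lq_order_def by blast
  then have "generated_by_variables n K"
    using \<open>p < q\<close> q unfolding K_def by fastforce
  then have "mdeg n x = 1" using x(1) unfolding generated_by_variables_def by blast
  moreover have "K \<subseteq> colon_ideal n (gen_ideal n (earlier v)) v"
    unfolding K_def
  proof (intro colon_ideal_mono gen_ideal_subset subsetI)
    fix w assume "w \<in> set (take q (ord j))"
    then obtain i where "i < q" "ord j ! i = w" using q(1) by (auto simp: in_set_conv_nth)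
    then have "w \<in> mgens (I j)" "precedes (ord j) w v"
      using q ord_mgens[OF j] nth_mem unfolding precedes_def by fastforce+
    then show "w \<in> gen_ideal n (earlier v)" using mem_gen_ideal_earlier[OF v] by (simp add: j_def)
  qed
  ultimately show ?thesis using x mgensD by blast
qed

lemma generated_by_variables_colon_earlier:
  assumes v: "v \<in> mgens sum_ideal"
  shows "generated_by_variables n (colon_ideal n (gen_ideal n (earlier v)) v)"
proof (rule generated_by_variables_colon_idealI)
  fix u assume "u \<in> earlier v"
  then have u: "u \<in> mgens sum_ideal"
    and "block u < block v \<or>
         block u = block v \<and> list_index (ord (block v)) u < list_index (ord (block v)) v"
    by (auto simp: rank_def less_prod_def)
  then show "\<exists>x\<in>colon_ideal n (gen_ideal n (earlier v)) v. mdeg n x = 1 \<and> mdvd x (mcolon u v)"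
    using variable_dvd_mcolon_earlier_block[OF v u] variable_dvd_mcolon_same_block[OF v u] by blast
qed

end

theorem lemma3p1:
  fixes n t :: nat and I :: "nat \<Rightarrow> monom set" and d :: "nat \<Rightarrow> nat"
    and ord :: "nat \<Rightarrow> monom list"
  assumes ideals: "\<And>j. 1 \<le> j \<Longrightarrow> j \<le> t \<Longrightarrow> monomial_ideal n (I j)"
    and single_degree: "\<And>j u. 1 \<le> j \<Longrightarrow> j \<le> t \<Longrightarrow> u \<in> mgens (I j) \<Longrightarrow> mdeg n u = d j"
    and degs_sorted: "\<And>i j. 1 \<le> i \<Longrightarrow> i \<le> j \<Longrightarrow> j \<le> t \<Longrightarrow> d i \<le> d j"
    and lq: "\<And>j. 1 \<le> j \<Longrightarrow> j \<le> t \<Longrightarrow> lq_order n (I j) (ord j)"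
    and star: "\<And>i j u v. 1 \<le> i \<Longrightarrow> i < j \<Longrightarrow> j \<le> t \<Longrightarrow> u \<in> mgens (I i) \<Longrightarrow>
                 v \<in> mgens (I j) \<Longrightarrow> mdeg n (mcolon u v) > 1 \<Longrightarrow>
                 \<exists>w. (w \<in> (\<Union>k\<in>{1..<j}. I k) \<or> (w \<in> mgens (I j) \<and> precedes (ord j) w v)) \<and>
                     mdeg n (mcolon w v) = 1 \<and> mdvd (mcolon w v) (mcolon u v)"
  shows "has_linear_quotients n (\<Union>j\<in>{1..t}. I j)"
proof -
  interpret lq_ideal_family n t I d ord
    using assms by unfold_locales
  show ?thesis
    using has_linear_quotientsI[OF finite_mgens_sum inj_on_rank generated_by_variables_colon_earlier] .
qed

end
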